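(* There is a closed subgroup $G$ of $\mathbb Z^\omega$ such that for every closed subgroup $H$ of $\mathbb Z^\omega$ there is a continuous group homomorphism $\varphi:\mathbb Z^\omega\to\mathbb Z^\omega$ with $\varphi^{-1}(G)=H$.
   Context: $\mathbb Z$ carries the discrete topology and $\mathbb Z^\omega$ the product topology. *)

theory Defs
  imports "HOL-Analysis.Analysis"
begin

definition Zomega :: "(nat \<Rightarrow> int) topology" where
  "Zomega = product_topology (\<lambda>_. discrete_topology (UNIV :: int set)) UNIV"

definition is_subgroup_Zomega :: "(nat \<Rightarrow> int) set \<Rightarrow> bool" where
  "is_subgroup_Zomega H \<longleftrightarrow>
     (\<lambda>_. 0) \<in> H \<and>
     (\<forall>x\<in>H. \<forall>y\<in>H. (\<lambda>i. x i + y i) \<in> H) \<and>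
     (\<forall>x\<in>H. (\<lambda>i. - x i) \<in> H)"

definition is_hom_Zomega :: "((nat \<Rightarrow> int) \<Rightarrow> (nat \<Rightarrow> int)) \<Rightarrow> bool" where
  "is_hom_Zomega \<phi> \<longleftrightarrow> (\<forall>x y. \<phi> (\<lambda>i. x i + y i) = (\<lambda>i. \<phi> x i + \<phi> y i))"

end

theory Submission
  imports Defs "HOL-Library.Countable" "HOL-Library.Nat_Bijection"
begin

text \<open>A closed subgroup H of Z^omega is determined by its truncations to the first n
  coordinates, and each truncation is a subgroup of Z^n, hence finitely generated. There are
  only countably many pairs (n, finite list of generators), so one can reserve a block of
  coordinates for each such pair and let G be the set of sequences whose m-th block lies in the
  span of the m-th generator list. Given H, the homomorphism writes the n-th truncation of x
  into every block whose pair describes the n-th truncation of H, and zero elsewhere;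
  then x is mapped into G iff every truncation of x lies in the corresponding truncation of H,
  i.e. iff x lies in the closure of H.\<close>

lemma topspace_Zomega [simp]: "topspace Zomega = UNIV"
  by (simp add: Zomega_def topspace_product_topology)

lemma continuous_map_Zomega_coordinatewise:
  assumes "\<And>j. (\<exists>i. \<forall>x. f x j = x i) \<or> (\<exists>c. \<forall>x. f x j = c)"
  shows "continuous_map Zomega Zomega f"
  unfolding Zomega_def continuous_map_componentwise_UNIV
proof
  fix j
  from assms[of j] show "continuous_map (product_topology (\<lambda>_. discrete_topology UNIV) UNIV)
      (discrete_topology UNIV) (\<lambda>x. f x j)"
  proof
    assume "\<exists>i. \<forall>x. f x j = x i"
    then obtain i where "(\<lambda>x. f x j) = (\<lambda>x. x i)" by auto
    then show ?thesis
      using continuous_map_product_projection[of i UNIV "\<lambda>_. discrete_topology UNIV"] by simp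
  next
    assume "\<exists>c. \<forall>x. f x j = c"
    then obtain c where "(\<lambda>x. f x j) = (\<lambda>x. c)" by auto
    then show ?thesis by simp
  qed
qed

lemma closedin_Zomega_iff:
  "closedin Zomega S \<longleftrightarrow> (\<forall>y. (\<forall>k. \<exists>s\<in>S. \<forall>i<k. s i = y i) \<longrightarrow> y \<in> S)"
proof
  assume "closedin Zomega S"
  then have "openin Zomega (UNIV - S)" by (simp add: closedin_def)
  show "\<forall>y. (\<forall>k. \<exists>s\<in>S. \<forall>i<k. s i = y i) \<longrightarrow> y \<in> S"
  proof (intro allI impI)
    fix y assume approx: "\<forall>k. \<exists>s\<in>S. \<forall>i<k. s i = y i"
    show "y \<in> S"
    proof (rule ccontr)
      assume "y \<notin> S"
      with \<open>openin Zomega (UNIV - S)\<close> obtain U where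
        U: "finite {i. U i \<noteq> UNIV}" "y \<in> Pi\<^sub>E UNIV U" "Pi\<^sub>E UNIV U \<subseteq> UNIV - S"
        unfolding Zomega_def openin_product_topology_alt by fastforce
      then obtain k where k: "\<forall>i\<in>{i. U i \<noteq> UNIV}. i < k"
        using finite_nat_set_iff_bounded by blast
      obtain s where s: "s \<in> S" "\<forall>i<k. s i = y i" using approx by blast
      have "s i \<in> U i" for i
        using k s(2) U(2) by (cases "i < k") auto
      then have "s \<in> Pi\<^sub>E UNIV U" by auto
      then show False using U(3) s(1) by blast
    qed
  qed
next
  assume limits: "\<forall>y. (\<forall>k. \<exists>s\<in>S. \<forall>i<k. s i = y i) \<longrightarrow> y \<in> S"
  have "openin Zomega (UNIV - S)"
    unfolding Zomega_def openin_product_topology_alt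
  proof
    fix y assume "y \<in> UNIV - S"
    then have "\<not> (\<forall>k. \<exists>s\<in>S. \<forall>i<k. s i = y i)" using limits by blast
    then obtain k where k: "\<forall>s\<in>S. \<exists>i<k. s i \<noteq> y i" by blast
    define U where "U = (\<lambda>i. if i < k then {y i} else (UNIV::int set))"
    have "finite {i. U i \<noteq> UNIV}"
      by (rule finite_subset[of _ "{..<k}"]) (auto simp: U_def split: if_splits)
    moreover have "Pi\<^sub>E UNIV U \<subseteq> UNIV - S"
    proof
      fix z assume z: "z \<in> Pi\<^sub>E UNIV U"
      have "z i = y i" if "i < k" for i
        using that z[unfolded PiE_iff] by (metis U_def singletonD UNIV_I)
      then show "z \<in> UNIV - S" using k by blast
    qed
    moreover have "y \<in> Pi\<^sub>E UNIV U" by (auto simp: U_def)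
    ultimately show "\<exists>U. finite {i \<in> UNIV. U i \<noteq> topspace (discrete_topology (UNIV::int set))} \<and>
        (\<forall>i\<in>UNIV. openin (discrete_topology (UNIV::int set)) (U i)) \<and>
        y \<in> Pi\<^sub>E UNIV U \<and> Pi\<^sub>E UNIV U \<subseteq> UNIV - S"
      by (intro exI[of _ U]) simp
  qed
  then show "closedin Zomega S" by (simp add: closedin_def)
qed

lemma closedin_Zomega_bounded_support:
  assumes "\<And>x i. x \<in> S \<Longrightarrow> N \<le> i \<Longrightarrow> x i = 0"
  shows "closedin Zomega S"
  unfolding closedin_Zomega_iff
proof (intro allI impI)
  fix y assume approx: "\<forall>k. \<exists>s\<in>S. \<forall>i<k. s i = y i"
  then obtain s where s: "s \<in> S" "\<forall>i<N. s i = y i" by blast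
  have "y i = s i" for i
  proof (cases "i < N")
    case False
    obtain s' where "s' \<in> S" "s' i = y i" using approx[rule_format, of "Suc i"] by auto
    then have "y i = 0" using False assms[of s' i] by simp
    then show ?thesis using False assms[OF s(1), of i] by simp
  qed (use s in auto)
  with s(1) show "y \<in> S" by (metis ext)
qed

lemma subgroup_zero: "is_subgroup_Zomega L \<Longrightarrow> (\<lambda>_. 0) \<in> L"
  and subgroup_add: "is_subgroup_Zomega L \<Longrightarrow> x \<in> L \<Longrightarrow> y \<in> L \<Longrightarrow> (\<lambda>i. x i + y i) \<in> L"
  and subgroup_uminus: "is_subgroup_Zomega L \<Longrightarrow> x \<in> L \<Longrightarrow> (\<lambda>i. - x i) \<in> L"
  by (simp_all add: is_subgroup_Zomega_def)

lemma subgroup_diff: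
  "is_subgroup_Zomega L \<Longrightarrow> x \<in> L \<Longrightarrow> y \<in> L \<Longrightarrow> (\<lambda>i. x i - y i) \<in> L"
  using subgroup_add[of L x "\<lambda>i. - y i"] subgroup_uminus[of L y] by simp

lemma subgroup_scale:
  assumes "is_subgroup_Zomega L" "v \<in> L"
  shows "(\<lambda>i. c * v i) \<in> L"
proof -
  have nat_multiple: "(\<lambda>i. int k * v i) \<in> L" for k
  proof (induction k)
    case 0
    then show ?case using subgroup_zero[OF assms(1)] by simp
  next
    case (Suc k)
    then show ?case
      using subgroup_add[OF assms(1) Suc assms(2)] by (simp add: algebra_simps)
  qed
  show ?thesis
  proof (cases "c \<ge> 0")
    case True
    then show ?thesis using nat_multiple[of "nat c"] by simp
  next
    case False
    then show ?thesis using subgroup_uminus[OF assms(1) nat_multiple[of "nat (- c)"]] by simp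
  qed
qed

lemma subgroup_coordinate_divisor:
  assumes L: "is_subgroup_Zomega L"
  shows "\<exists>v\<in>L. \<forall>x\<in>L. v n dvd x n"
proof (cases "\<forall>x\<in>L. x n = 0")
  case True
  then show ?thesis using subgroup_zero[OF L] by (metis dvd_0_right)
next
  case False
  then obtain x0 where "x0 \<in> L" "x0 n \<noteq> 0" by blast
  then have "\<exists>x\<in>L. x n = \<bar>x0 n\<bar>"
    using subgroup_uminus[OF L] by (cases "x0 n > 0") force+
  then have ex: "\<exists>d::nat. d > 0 \<and> (\<exists>x\<in>L. x n = int d)"
    using \<open>x0 n \<noteq> 0\<close> by (intro exI[of _ "nat \<bar>x0 n\<bar>"]) auto
  define d where "d = (LEAST d::nat. d > 0 \<and> (\<exists>x\<in>L. x n = int d))"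
  have "d > 0 \<and> (\<exists>x\<in>L. x n = int d)"
    unfolding d_def by (rule LeastI_ex[OF ex])
  then obtain v where "d > 0" "v \<in> L" "v n = int d" by blast
  have "v n dvd x n" if "x \<in> L" for x
  proof -
    have "(\<lambda>i. x i - (x n div int d) * v i) \<in> L"
      using subgroup_diff[OF L that subgroup_scale[OF L \<open>v \<in> L\<close>]] .
    moreover have "x n - (x n div int d) * v n = int (nat (x n mod int d))"
      using \<open>v n = int d\<close> \<open>d > 0\<close> minus_div_mult_eq_mod[of "x n" "int d"] by simp
    moreover have "nat (x n mod int d) < d"
      using \<open>d > 0\<close> by (simp add: nat_less_iff)
    ultimately have "nat (x n mod int d) = 0"
      using not_less_Least[of "nat (x n mod int d)"] unfolding d_def by fastforce
    then have "x n mod int d \<le> 0" by simp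
    moreover have "0 \<le> x n mod int d" using \<open>d > 0\<close> by simp
    ultimately have "x n mod int d = 0" by linarith
    then show ?thesis
      using \<open>v n = int d\<close> by (simp add: dvd_eq_mod_eq_0)
  qed
  with \<open>v \<in> L\<close> show ?thesis by blast
qed

lemma subgroup_split_coordinate:
  assumes L: "is_subgroup_Zomega L" and "v \<in> L" and v_dvd: "\<forall>x\<in>L. v n dvd x n"
  shows "L = {\<lambda>i. a * v i + w i | a w. w \<in> L \<and> w n = 0}"
proof safe
  fix x assume "x \<in> L"
  then obtain a where "x n = v n * a" using v_dvd by (auto elim: dvdE)
  moreover have "(\<lambda>i. x i - a * v i) \<in> L"
    using subgroup_diff[OF L \<open>x \<in> L\<close> subgroup_scale[OF L \<open>v \<in> L\<close>]] .
  ultimately show "\<exists>a w. x = (\<lambda>i. a * v i + w i) \<and> w \<in> L \<and> w n = 0"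
    by (intro exI[of _ a] exI[of _ "\<lambda>i. x i - a * v i"]) auto
next
  fix a w assume "w \<in> L"
  then show "(\<lambda>i. a * v i + w i) \<in> L"
    using subgroup_add[OF L subgroup_scale[OF L \<open>v \<in> L\<close>]] by blast
qed

definition vec_of_list :: "int list \<Rightarrow> nat \<Rightarrow> int" where
  "vec_of_list g i = (if i < length g then g ! i else 0)"

fun int_span :: "int list list \<Rightarrow> (nat \<Rightarrow> int) set" where
  "int_span [] = {\<lambda>_. 0}"
| "int_span (g # gs) = {\<lambda>i. a * vec_of_list g i + w i | a w. w \<in> int_span gs}"

lemma subgroup_int_span: "is_subgroup_Zomega (int_span gs)"
proof (induction gs)
  case Nil
  then show ?case by (simp add: is_subgroup_Zomega_def)
next
  case (Cons g gs)
  have "(\<lambda>_. 0) \<in> int_span (g # gs)"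
    using subgroup_zero[OF Cons.IH] by force
  moreover have "(\<lambda>i. x i + y i) \<in> int_span (g # gs)"
    if x: "x \<in> int_span (g # gs)" and y: "y \<in> int_span (g # gs)" for x y
  proof -
    obtain a u where "u \<in> int_span gs" "x = (\<lambda>i. a * vec_of_list g i + u i)"
      using x by (simp only: int_span.simps mem_Collect_eq) blast
    moreover obtain b w where "w \<in> int_span gs" "y = (\<lambda>i. b * vec_of_list g i + w i)"
      using y by (simp only: int_span.simps mem_Collect_eq) blast
    ultimately have "(\<lambda>i. x i + y i) = (\<lambda>i. (a + b) * vec_of_list g i + (u i + w i))"
      by (simp add: algebra_simps)
    then show ?thesis
      unfolding int_span.simps mem_Collect_eq
      using subgroup_add[OF Cons.IH \<open>u \<in> int_span gs\<close> \<open>w \<in> int_span gs\<close>]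
      by (intro exI[of _ "a + b"] exI[of _ "\<lambda>i. u i + w i"]) simp
  qed
  moreover have "(\<lambda>i. - x i) \<in> int_span (g # gs)" if x: "x \<in> int_span (g # gs)" for x
  proof -
    obtain a u where "u \<in> int_span gs" "x = (\<lambda>i. a * vec_of_list g i + u i)"
      using x by (simp only: int_span.simps mem_Collect_eq) blast
    then have "(\<lambda>i. - x i) = (\<lambda>i. (- a) * vec_of_list g i + - u i)"
      by simp
    then show ?thesis
      unfolding int_span.simps mem_Collect_eq
      using subgroup_uminus[OF Cons.IH \<open>u \<in> int_span gs\<close>]
      by (intro exI[of _ "- a"] exI[of _ "\<lambda>i. - u i"]) simp
  qed
  ultimately show ?case by (simp add: is_subgroup_Zomega_def)
qed

lemma int_span_vanishing:
  "z \<in> int_span gs \<Longrightarrow> \<forall>g\<in>set gs. length g \<le> N \<Longrightarrow> N \<le> i \<Longrightarrow> z i = 0"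
  by (induction gs arbitrary: z) (auto simp: vec_of_list_def)

lemma closedin_int_span: "closedin Zomega (int_span gs)"
  by (rule closedin_Zomega_bounded_support[of _ "Max (insert 0 (length ` set gs))"])
    (erule int_span_vanishing, auto)

lemma subgroup_bounded_support_int_span:
  "is_subgroup_Zomega L \<Longrightarrow> \<forall>x\<in>L. \<forall>i\<ge>n. x i = 0 \<Longrightarrow> \<exists>gs. int_span gs = L"
proof (induction n arbitrary: L)
  case 0
  then have "L = {\<lambda>_. 0}" using subgroup_zero by fastforce
  then show ?case by (metis int_span.simps(1))
next
  case (Suc n)
  define L' where "L' = {x \<in> L. x n = 0}"
  have "is_subgroup_Zomega L'"
    using Suc.prems(1) unfolding L'_def is_subgroup_Zomega_def by auto
  moreover have "\<forall>x\<in>L'. \<forall>i\<ge>n. x i = 0"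
    using Suc.prems(2) unfolding L'_def by (metis (mono_tags) Suc_leI le_neq_implies_less mem_Collect_eq)
  ultimately obtain gs where gs: "int_span gs = L'" using Suc.IH by blast
  obtain v where "v \<in> L" and v_dvd: "\<forall>x\<in>L. v n dvd x n"
    using subgroup_coordinate_divisor[OF Suc.prems(1)] by blast
  have "vec_of_list (map v [0..<Suc n]) = v"
    using Suc.prems(2) \<open>v \<in> L\<close> by (auto simp: vec_of_list_def fun_eq_iff simp del: upt_Suc)
  then have "int_span (map v [0..<Suc n] # gs) = L"
    using subgroup_split_coordinate[OF Suc.prems(1) \<open>v \<in> L\<close> v_dvd] by (simp add: gs L'_def)
  then show ?case by blast
qed

definition trunc :: "nat \<Rightarrow> (nat \<Rightarrow> int) \<Rightarrow> nat \<Rightarrow> int" where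
  "trunc n x = (\<lambda>i. if i < n then x i else 0)"

lemma trunc_eq_iff: "trunc n x = trunc n y \<longleftrightarrow> (\<forall>i<n. x i = y i)"
  by (auto simp: trunc_def fun_eq_iff)

lemma subgroup_trunc_image:
  assumes H: "is_subgroup_Zomega H"
  shows "is_subgroup_Zomega (trunc n ` H)"
  unfolding is_subgroup_Zomega_def
proof (intro conjI ballI)
  show "(\<lambda>_. 0) \<in> trunc n ` H"
    using subgroup_zero[OF H] by (force simp: trunc_def)
next
  fix x y assume "x \<in> trunc n ` H" "y \<in> trunc n ` H"
  then obtain a b where "a \<in> H" "b \<in> H" "x = trunc n a" "y = trunc n b" by blast
  then have "(\<lambda>i. x i + y i) = trunc n (\<lambda>i. a i + b i)"
    by (simp add: trunc_def fun_eq_iff)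
  with subgroup_add[OF H \<open>a \<in> H\<close> \<open>b \<in> H\<close>] show "(\<lambda>i. x i + y i) \<in> trunc n ` H" by blast
next
  fix x assume "x \<in> trunc n ` H"
  then obtain a where "a \<in> H" "x = trunc n a" by blast
  then have "(\<lambda>i. - x i) = trunc n (\<lambda>i. - a i)"
    by (simp add: trunc_def fun_eq_iff)
  with subgroup_uminus[OF H \<open>a \<in> H\<close>] show "(\<lambda>i. - x i) \<in> trunc n ` H" by blast
qed

lemma closedin_Zomega_iff_trunc:
  "closedin Zomega H \<longleftrightarrow> (\<forall>x. (\<forall>n. trunc n x \<in> trunc n ` H) \<longrightarrow> x \<in> H)"
proof -
  have "(\<exists>s\<in>H. \<forall>i<n. s i = x i) \<longleftrightarrow> trunc n x \<in> trunc n ` H" for x n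
    unfolding image_iff trunc_eq_iff by (simp add: eq_commute[of "x _"])
  then show ?thesis by (simp add: closedin_Zomega_iff)
qed

definition code_level :: "nat \<Rightarrow> nat" where
  "code_level m = fst (from_nat m :: nat \<times> int list list)"

definition code_span :: "nat \<Rightarrow> (nat \<Rightarrow> int) set" where
  "code_span m = int_span (snd (from_nat m :: nat \<times> int list list))"

definition block :: "nat \<Rightarrow> (nat \<Rightarrow> int) \<Rightarrow> nat \<Rightarrow> int" where
  "block m y = (\<lambda>i. y (prod_encode (m, i)))"

definition universal_subgroup :: "(nat \<Rightarrow> int) set" where
  "universal_subgroup = {y. \<forall>m. block m y \<in> code_span m}"

lemma code_surj: "\<exists>m. code_level m = n \<and> code_span m = int_span gs"
  by (intro exI[of _ "to_nat (n, gs)"]) (simp add: code_level_def code_span_def)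

lemma subgroup_universal_subgroup: "is_subgroup_Zomega universal_subgroup"
  using subgroup_int_span
  unfolding universal_subgroup_def code_span_def block_def is_subgroup_Zomega_def
  by simp

lemma closedin_universal_subgroup: "closedin Zomega universal_subgroup"
proof -
  have "continuous_map Zomega Zomega (block m)" for m
    by (rule continuous_map_Zomega_coordinatewise) (auto simp: block_def)
  then have "closedin Zomega {y \<in> topspace Zomega. block m y \<in> code_span m}" for m
    by (rule closedin_continuous_map_preimage) (simp add: code_span_def closedin_int_span)
  then have "closedin Zomega (\<Inter>m. {y \<in> topspace Zomega. block m y \<in> code_span m})"
    by (intro closedin_Inter) auto
  then show ?thesis by (simp add: universal_subgroup_def Inter_eq)
qed

definition reduction_map :: "(nat \<Rightarrow> int) set \<Rightarrow> (nat \<Rightarrow> int) \<Rightarrow> nat \<Rightarrow> int" where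
  "reduction_map H x j =
     (case prod_decode j of (m, i) \<Rightarrow>
        if code_span m = trunc (code_level m) ` H then trunc (code_level m) x i else 0)"

lemma block_reduction_map:
  "block m (reduction_map H x) =
     (if code_span m = trunc (code_level m) ` H then trunc (code_level m) x else (\<lambda>_. 0))"
  by (simp add: block_def reduction_map_def fun_eq_iff)

lemma continuous_map_reduction_map: "continuous_map Zomega Zomega (reduction_map H)"
proof (rule continuous_map_Zomega_coordinatewise)
  fix j
  obtain m i where "prod_decode j = (m, i)" by fastforce
  then show "(\<exists>k. \<forall>x. reduction_map H x j = x k) \<or> (\<exists>c. \<forall>x. reduction_map H x j = c)"
    by (cases "code_span m = trunc (code_level m) ` H \<and> i < code_level m")
      (auto simp: reduction_map_def trunc_def)
qed

lemma is_hom_reduction_map: "is_hom_Zomega (reduction_map H)"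
  by (simp add: is_hom_Zomega_def reduction_map_def trunc_def fun_eq_iff split: prod.split)

lemma reduction_map_preimage:
  assumes "is_subgroup_Zomega H" "closedin Zomega H"
  shows "reduction_map H -` universal_subgroup = H"
proof -
  have code_exists: "\<exists>m. code_level m = n \<and> code_span m = trunc n ` H" for n
  proof -
    have "\<forall>z\<in>trunc n ` H. \<forall>i\<ge>n. z i = 0" by (auto simp: trunc_def)
    then obtain gs where "int_span gs = trunc n ` H"
      using subgroup_bounded_support_int_span[OF subgroup_trunc_image[OF assms(1)]] by blast
    then show ?thesis using code_surj[of n gs] by auto
  qed
  have "x \<in> reduction_map H -` universal_subgroup \<longleftrightarrow>
      (\<forall>m. code_span m = trunc (code_level m) ` H \<longrightarrow> trunc (code_level m) x \<in> code_span m)" for x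
    using subgroup_zero[OF subgroup_int_span]
    by (simp add: universal_subgroup_def block_reduction_map code_span_def)
  also have "\<dots> x \<longleftrightarrow> (\<forall>n. trunc n x \<in> trunc n ` H)" for x
    using code_exists by metis
  finally show ?thesis
    using assms(2) unfolding closedin_Zomega_iff_trunc by blast
qed

theorem mainTheorem7:
  shows "\<exists>G. is_subgroup_Zomega G \<and> closedin Zomega G \<and>
    (\<forall>H. is_subgroup_Zomega H \<and> closedin Zomega H \<longrightarrow>
      (\<exists>\<phi>. continuous_map Zomega Zomega \<phi> \<and> is_hom_Zomega \<phi> \<and> \<phi> -` G = H))"
  using subgroup_universal_subgroup closedin_universal_subgroup continuous_map_reduction_map
    is_hom_reduction_map reduction_map_preimage
  by blast

end
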